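(* Let $E$ be a realizable matrix and let $A$ be a $(0,1)$ matrix such that $A$ and $A+E$ are Gram mates. Then for every $\mathbf x\in\mathrm{Row}(E)$ we have $A\mathbf x\in\mathrm{Col}(E)$, and for every $\mathbf y\in\mathrm{Col}(E)$ we have $A^T\mathbf y\in\mathrm{Row}(E)$.
   Context: Two $(0,1)$ matrices $A,B$ are Gram mates if $AA^T=BB^T$, $A^TA=B^TB$ and $A\neq B$. A $(0,1,-1)$ matrix $E$ with $E\mathbf 1=0$ and $\mathbf 1^TE=0^T$ is realizable if there is a $(0,1)$ matrix $A$ such that $A$ and $A+E$ are Gram mates. $\mathrm{Row}(E)$, $\mathrm{Col}(E)$ denote the row space and column space of $E$ (as subspaces of the appropriate $\mathbb R^n$, $\mathbb R^m$). *)

theory Defs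
  imports "HOL-Analysis.Analysis"
begin

definition zero_one_matrix :: "real^'n^'m \<Rightarrow> bool" where
  "zero_one_matrix A \<longleftrightarrow> (\<forall>i j. A$i$j = 0 \<or> A$i$j = 1)"

definition gram_mates :: "real^'n^'m \<Rightarrow> real^'n^'m \<Rightarrow> bool" where
  "gram_mates A B \<longleftrightarrow> zero_one_matrix A \<and> zero_one_matrix B \<and>
     A ** transpose A = B ** transpose B \<and>
     transpose A ** A = transpose B ** B \<and> A \<noteq> B"

definition realizable :: "real^'n^'m \<Rightarrow> bool" where
  "realizable E \<longleftrightarrow>
     (\<forall>i j. E$i$j = 0 \<or> E$i$j = 1 \<or> E$i$j = -1) \<and>
     E *v (\<chi> j. 1) = 0 \<and> (\<chi> i. 1) v* E = 0 \<and>
     (\<exists>A. zero_one_matrix A \<and> gram_mates A (A + E))"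

definition row_space :: "real^'n^'m \<Rightarrow> (real^'n) set" where
  "row_space E = span (rows E)"

definition col_space :: "real^'n^'m \<Rightarrow> (real^'m) set" where
  "col_space E = span (columns E)"

end

theory Submission
  imports Defs
begin

text \<open>Expanding the Gram identity \<open>(A + E)(A + E)\<^sup>T = A A\<^sup>T\<close> gives
  \<open>A E\<^sup>T = - E (A + E)\<^sup>T\<close>, so \<open>A\<close> maps the column space of \<open>E\<^sup>T\<close>, which is
  \<open>Row(E)\<close>, into \<open>Col(E)\<close>. The identity \<open>(A + E)\<^sup>T (A + E) = A\<^sup>T A\<close> is the
  same Gram identity for \<open>A\<^sup>T\<close> and \<open>E\<^sup>T\<close>, and yields the dual statement.\<close>

lemma matrix_add_rdistrib:
  fixes A B :: "'a::semiring_1^'n^'m" and C :: "'a^'p^'n"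
  shows "(A + B) ** C = A ** C + B ** C"
  by (vector matrix_matrix_mult_def sum.distrib[symmetric] field_simps)

lemma matrix_mul_rneg:
  fixes A :: "'a::ring_1^'n^'m" and B :: "'a^'p^'n"
  shows "A ** (- B) = - (A ** B)"
  by (vector matrix_matrix_mult_def sum_negf[symmetric])

lemma transpose_add: "transpose (A + B) = transpose A + transpose B"
  by (simp add: transpose_def vec_eq_iff)

lemma span_columns_eq_range:
  fixes A :: "real^'n^'m"
  shows "span (columns A) = range ((*v) A)"
proof
  have "subspace (range ((*v) A))"
    using linear_subspace_image[OF matrix_vector_mul_linear subspace_UNIV] .
  moreover have "columns A \<subseteq> range ((*v) A)"
    by (simp add: columns_image_basis image_subsetI)
  ultimately show "span (columns A) \<subseteq> range ((*v) A)"
    by (rule span_minimal[rotated])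
qed (auto simp: matrix_vector_mult_in_columnspace)

lemma matrix_vector_mult_span_columns:
  fixes A :: "real^'k^'m" and B :: "real^'n^'k" and C :: "real^'l^'m" and D :: "real^'n^'l"
  assumes "A ** B = C ** D" and "x \<in> span (columns B)"
  shows "A *v x \<in> span (columns C)"
proof -
  from assms(2) obtain y where "x = B *v y"
    by (auto simp: span_columns_eq_range)
  then have "A *v x = C *v (D *v y)"
    by (simp add: matrix_vector_mul_assoc assms(1))
  then show ?thesis
    by (simp add: span_columns_eq_range)
qed

lemma gram_eq_imp_mult_transpose_diff:
  fixes A E :: "'a::comm_ring_1^'n^'m"
  assumes "A ** transpose A = (A + E) ** transpose (A + E)"
  shows "A ** transpose E = E ** (- transpose (A + E))"
proof -
  have "(A + E) ** transpose (A + E)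
          = A ** transpose A + (A ** transpose E + E ** transpose (A + E))"
    by (simp add: matrix_add_ldistrib matrix_add_rdistrib transpose_add add.assoc)
  with assms show ?thesis
    by (simp add: matrix_mul_rneg eq_neg_iff_add_eq_0)
qed

theorem proposition3p3:
  fixes E A :: "real^'n^'m"
  assumes "realizable E"
    and "zero_one_matrix A"
    and "gram_mates A (A + E)"
  shows "(\<forall>x \<in> row_space E. A *v x \<in> col_space E) \<and>
         (\<forall>y \<in> col_space E. transpose A *v y \<in> row_space E)"
proof -
  have "A ** transpose A = (A + E) ** transpose (A + E)"
    and "transpose A ** A = transpose (A + E) ** (A + E)"
    using assms(3) by (auto simp: gram_mates_def)
  then have "A ** transpose E = E ** (- transpose (A + E))"
    and "transpose A ** transpose (transpose E)
           = transpose E ** (- transpose (transpose A + transpose E))"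
    using gram_eq_imp_mult_transpose_diff[of A E]
      gram_eq_imp_mult_transpose_diff[of "transpose A" "transpose E"]
    by (simp_all add: transpose_add)
  then show ?thesis
    unfolding row_space_def col_space_def
    by (metis matrix_vector_mult_span_columns rows_transpose columns_transpose)
qed

end
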